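(* In the setting below, $\lambda_P(\mathrm{I}_{n-t}(\mathbf{J})) = \Delta^{n-t}\mathcal{O}$ as ideals of $\mathcal{O}$, where $\mathbf{J}$ is the Jacobian matrix of $f_1,\ldots,f_{n-t}$.
   Context: Let $\mathcal{O}$ be a discrete valuation ring with uniformiser $\varpi$. Let $2\le m\le n$, $t=m-1$, $P=\mathcal{O}[X_{m\times n}]$ (polynomial ring in the entries of an $m\times n$ matrix of indeterminates $X$), $X_{[a,b]}$ the submatrix of columns $a$ through $b$, and $f_k=\det X_{[k,k+t]}$ for $1\le k\le n-t$. The Jacobian $\mathbf{J}$ is the $mn\times(n-t)$ matrix over $P$ with rows indexed by the variables $X_{ij}$, columns indexed by $k$, and entries $\partial f_k/\partial X_{ij}$; $\mathrm{I}_{n-t}(\mathbf{J})$ is its ideal of $(n-t)\times(n-t)$ minors. Fix integers $0\le a_1\le\cdots\le a_t$, let $D=\operatorname{diag}(\varpi^{a_1},\ldots,\varpi^{a_t})$, $\Delta=\det D$. Let $\mathbf{a}\in\mathcal{O}^{m\times n}$ have zero last row and top $t$ entries of column $j$ equal to the $r$-th column of $D$, where $1\le r\le t$, $r\equiv j\pmod t$. Let $\lambda_P\colon P\to\mathcal{O}$ be the $\mathcal{O}$-algebra map $X_{ij}\mapsto\mathbf{a}_{ij}$. *)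

theory Defs
  imports "HOL-Library.Poly_Mapping" "HOL-Combinatorics.Permutations"
begin

definition dvr_uniformiser :: "'a::idom \<Rightarrow> bool" where
  "dvr_uniformiser p \<longleftrightarrow> p \<noteq> 0 \<and> \<not> p dvd 1 \<and>
     (\<forall>x. x \<noteq> 0 \<longrightarrow> (\<exists>u k. u dvd 1 \<and> x = u * p ^ k))"

type_synonym ('v, 'a) mpoly = "('v \<Rightarrow>\<^sub>0 nat) \<Rightarrow>\<^sub>0 'a"

definition Var :: "'v \<Rightarrow> ('v, 'a::comm_ring_1) mpoly" where
  "Var v = Poly_Mapping.single (Poly_Mapping.single v 1) 1"

definition pdiff :: "'v \<Rightarrow> ('v, 'a::comm_ring_1) mpoly \<Rightarrow> ('v, 'a) mpoly" where
  "pdiff v p = sum (\<lambda>mn::'v \<Rightarrow>\<^sub>0 nat.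
      Poly_Mapping.single (mn - Poly_Mapping.single v 1) (of_nat (Poly_Mapping.lookup mn v) * Poly_Mapping.lookup p mn)) (Poly_Mapping.keys p)"

definition peval :: "('v \<Rightarrow> 'a::comm_ring_1) \<Rightarrow> ('v, 'a) mpoly \<Rightarrow> 'a" where
  "peval a p = sum (\<lambda>mn::'v \<Rightarrow>\<^sub>0 nat. Poly_Mapping.lookup p mn * (\<Prod>v\<in>Poly_Mapping.keys mn. a v ^ Poly_Mapping.lookup mn v)) (Poly_Mapping.keys p)"

definition detq :: "nat \<Rightarrow> (nat \<Rightarrow> nat \<Rightarrow> 'a::comm_ring_1) \<Rightarrow> 'a" where
  "detq q M = (\<Sum>\<sigma> | \<sigma> permutes {0..<q}. of_int (sign \<sigma>) * (\<Prod>i<q. M i (\<sigma> i)))"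

definition ideal_gen :: "'a::comm_ring_1 set \<Rightarrow> 'a set" where
  "ideal_gen S = {x. \<exists>F c. finite F \<and> F \<subseteq> S \<and> x = (\<Sum>g\<in>F. c g * g)}"

text \<open>Setting: X is the m x n matrix of variables X_(i,j), 1 <= i <= m, 1 <= j <= n;
t = m - 1; f_k = det X_[k,k+t], 1 <= k <= n - t.\<close>
definition fk :: "nat \<Rightarrow> nat \<Rightarrow> (nat \<times> nat, 'a::comm_ring_1) mpoly" where
  "fk m k = detq m (\<lambda>r c. Var (r + 1, k + c))"

definition jac :: "nat \<Rightarrow> nat \<times> nat \<Rightarrow> nat \<Rightarrow> (nat \<times> nat, 'a::comm_ring_1) mpoly" where
  "jac m v k = pdiff v (fk m k)"

text \<open>The (n-t) x (n-t) minors of the mn x (n-t) Jacobian: choose n-t distinct rows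
(variables) in some order (up to sign this gives all maximal minors).\<close>
definition jac_minors :: "nat \<Rightarrow> nat \<Rightarrow> (nat \<times> nat, 'a::comm_ring_1) mpoly set" where
  "jac_minors m n = (let t = m - 1 in
     {detq (n - t) (\<lambda>r c. jac m (\<rho> r) (c + 1)) | \<rho>.
        inj_on \<rho> {0..<n - t} \<and> \<rho> ` {0..<n - t} \<subseteq> {1..m} \<times> {1..n}})"

text \<open>The point a: last row zero, top t entries of column j equal the r-th column of
D = diag(p^e_1,...,p^e_t), where 1 <= r <= t, r = j mod t.\<close>
definition apt :: "nat \<Rightarrow> 'a::comm_ring_1 \<Rightarrow> (nat \<Rightarrow> nat) \<Rightarrow> nat \<times> nat \<Rightarrow> 'a" where
  "apt m p e v = (let t = m - 1; i = fst v; j = snd v; r = (j + t - 1) mod t + 1 in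
     if 1 \<le> i \<and> i \<le> t \<and> i = r then p ^ e r else 0)"

end

theory Submission
  imports Defs
begin

text \<open>At the point \<open>a\<close> the last row of \<open>X\<close> vanishes, so \<open>\<partial>f\<^sub>k/\<partial>X\<^sub>v\<close> evaluated at \<open>a\<close> is the
determinant of \<open>X\<^bsub>[k,k+t]\<^esub>(a)\<close> with its last row replaced by the indicator row of \<open>v\<close>.
Row \<open>l \<le> t\<close> of \<open>a\<close> has all its entries in \<open>{0, p\<^bsup>e l\<^esup>}\<close>, so \<open>\<Delta>\<close> divides every entry of
\<open>J(a)\<close> and \<open>\<Delta>\<^bsup>n-t\<^esup>\<close> divides every maximal minor. Conversely, the minor on the variables
\<open>X\<^sub>m\<^sub>,\<^sub>1, \<dots>, X\<^sub>m\<^sub>,\<^sub>n\<^sub>-\<^sub>t\<close> is triangular, because \<open>X\<^sub>m\<^sub>,\<^sub>i\<close> does not occur in \<open>f\<^sub>k\<close> for \<open>i < k\<close>,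
and its diagonal entries are \<open>\<plusminus>\<Delta>\<close>: the top block of any \<open>t\<close> consecutive columns of \<open>a\<close> is
\<open>D\<close> with permuted columns. Hence the evaluated ideal is generated by \<open>\<Delta>\<^bsup>n-t\<^esup>\<close>.\<close>

subsection \<open>Evaluation of polynomials\<close>

definition eval_monom :: "('v \<Rightarrow> 'a::comm_ring_1) \<Rightarrow> ('v \<Rightarrow>\<^sub>0 nat) \<Rightarrow> 'a" where
  "eval_monom a mn = (\<Prod>v\<in>Poly_Mapping.keys mn. a v ^ Poly_Mapping.lookup mn v)"

lemma eval_monom_superset:
  assumes "finite K" "Poly_Mapping.keys mn \<subseteq> K"
  shows "eval_monom a mn = (\<Prod>v\<in>K. a v ^ Poly_Mapping.lookup mn v)"
  unfolding eval_monom_def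
  by (rule prod.mono_neutral_left[OF assms]) (auto simp: in_keys_iff)

lemma eval_monom_add: "eval_monom a (x + y) = eval_monom a x * eval_monom a y"
proof -
  let ?K = "Poly_Mapping.keys x \<union> Poly_Mapping.keys y"
  have "eval_monom a (x + y) = (\<Prod>v\<in>?K. a v ^ Poly_Mapping.lookup (x + y) v)"
    by (rule eval_monom_superset) (auto simp: keys_add)
  also have "\<dots> = (\<Prod>v\<in>?K. a v ^ Poly_Mapping.lookup x v) * (\<Prod>v\<in>?K. a v ^ Poly_Mapping.lookup y v)"
    by (simp add: lookup_add power_add prod.distrib)
  also have "\<dots> = eval_monom a x * eval_monom a y"
    by (simp add: eval_monom_superset[symmetric])
  finally show ?thesis .
qed

lemma peval_superset:
  assumes "finite K" "Poly_Mapping.keys p \<subseteq> K"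
  shows "peval a p = (\<Sum>mn\<in>K. Poly_Mapping.lookup p mn * eval_monom a mn)"
  unfolding peval_def eval_monom_def[symmetric]
  by (rule sum.mono_neutral_left[OF assms]) (auto simp: in_keys_iff)

lemma peval_add: "peval a (p + q) = peval a p + peval a q"
proof -
  let ?K = "Poly_Mapping.keys p \<union> Poly_Mapping.keys q"
  have "peval a (p + q) = (\<Sum>mn\<in>?K. Poly_Mapping.lookup (p + q) mn * eval_monom a mn)"
    by (rule peval_superset) (auto simp: keys_add)
  also have "\<dots> = (\<Sum>mn\<in>?K. Poly_Mapping.lookup p mn * eval_monom a mn)
                  + (\<Sum>mn\<in>?K. Poly_Mapping.lookup q mn * eval_monom a mn)"
    by (simp add: lookup_add distrib_right sum.distrib)
  also have "\<dots> = peval a p + peval a q"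
    by (simp add: peval_superset[symmetric])
  finally show ?thesis .
qed

lemma peval_zero: "peval a 0 = 0"
  by (simp add: peval_def)

lemma peval_single: "peval a (Poly_Mapping.single x c) = c * eval_monom a x"
  by (subst peval_superset[where K="{x}"]) (auto simp: lookup_single)

lemma peval_sum: "peval a (sum f I) = (\<Sum>i\<in>I. peval a (f i))"
  by (induction I rule: infinite_finite_induct) (auto simp: peval_zero peval_add)

lemma sum_single_lookup:
  "(\<Sum>x\<in>Poly_Mapping.keys p. Poly_Mapping.single x (Poly_Mapping.lookup p x)) = p"
  by (rule poly_mapping_eqI)
    (simp add: lookup_sum lookup_single when_def in_keys_iff sum.delta' split: if_splits)

lemma mult_as_sum_single:
  "p * q = (\<Sum>x\<in>Poly_Mapping.keys p. \<Sum>y\<in>Poly_Mapping.keys q.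
      Poly_Mapping.single x (Poly_Mapping.lookup p x) * Poly_Mapping.single y (Poly_Mapping.lookup q y))"
  by (simp add: sum_single_lookup sum_product[symmetric])

lemma peval_mult: "peval a (p * q) = peval a p * peval a q"
proof -
  have "peval a (p * q) = (\<Sum>x\<in>Poly_Mapping.keys p. \<Sum>y\<in>Poly_Mapping.keys q.
      (Poly_Mapping.lookup p x * eval_monom a x) * (Poly_Mapping.lookup q y * eval_monom a y))"
    by (subst mult_as_sum_single)
      (simp add: peval_sum mult_single peval_single eval_monom_add algebra_simps)
  also have "\<dots> = peval a p * peval a q"
    by (simp add: peval_def eval_monom_def sum_product)
  finally show ?thesis .
qed

lemma peval_const: "peval a (Poly_Mapping.single 0 c) = c"
  by (simp add: peval_single eval_monom_def)

lemma peval_one: "peval a 1 = 1"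
  using peval_const[of a 1] by simp

lemma peval_of_int: "peval a (of_int z) = of_int z"
  using peval_const[of a "of_int z"] by simp

lemma peval_of_bool: "peval a (of_bool P) = of_bool P"
  by (cases P) (simp_all add: peval_one peval_zero)

lemma peval_prod: "peval a (prod f I) = (\<Prod>i\<in>I. peval a (f i))"
  by (induction I rule: infinite_finite_induct) (auto simp: peval_one peval_mult)

lemma peval_Var: "peval a (Var v) = a v"
  by (simp add: Var_def peval_single eval_monom_def)

lemma peval_detq: "peval a (detq q M) = detq q (\<lambda>i j. peval a (M i j))"
  by (simp add: detq_def peval_sum peval_mult peval_of_int peval_prod)

lemma peval_ideal_gen_eq_principal:
  assumes dvd: "\<And>g. g \<in> G \<Longrightarrow> d dvd peval a g"
    and "h \<in> G" and "peval a h * u = d"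
  shows "peval a ` ideal_gen G = {d * x | x. True}"
proof (intro set_eqI iffI)
  fix y assume "y \<in> peval a ` ideal_gen G"
  then obtain F c where "F \<subseteq> G" and y: "y = peval a (\<Sum>g\<in>F. c g * g)"
    unfolding ideal_gen_def by auto
  then have "d dvd y"
    unfolding y peval_sum peval_mult by (intro dvd_sum dvd_mult dvd) auto
  then show "y \<in> {d * x | x. True}"
    by (auto elim!: dvdE)
next
  fix y assume "y \<in> {d * x | x. True}"
  then obtain x where "y = d * x" by auto
  also have "\<dots> = peval a h * u * x"
    using assms(3) by simp
  also have "\<dots> = peval a (Poly_Mapping.single 0 (u * x) * h)"
    by (simp add: peval_mult peval_const mult_ac)
  finally have "y = peval a (Poly_Mapping.single 0 (u * x) * h)" .
  moreover have "Poly_Mapping.single 0 (u * x) * h \<in> ideal_gen G"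
    unfolding ideal_gen_def using \<open>h \<in> G\<close>
    by (intro CollectI exI[of _ "{h}"] exI[of _ "\<lambda>_. Poly_Mapping.single 0 (u * x)"]) auto
  ultimately show "y \<in> peval a ` ideal_gen G"
    by blast
qed

subsection \<open>Partial derivatives\<close>

lemma pdiff_superset:
  assumes "finite K" "Poly_Mapping.keys p \<subseteq> K"
  shows "pdiff v p = (\<Sum>mn\<in>K. Poly_Mapping.single (mn - Poly_Mapping.single v 1)
                               (of_nat (Poly_Mapping.lookup mn v) * Poly_Mapping.lookup p mn))"
  unfolding pdiff_def
  by (rule sum.mono_neutral_left[OF assms]) (auto simp: in_keys_iff)

lemma pdiff_add: "pdiff v (p + q) = pdiff v p + pdiff v q"
  by (subst (1 2 3) pdiff_superset[where K="Poly_Mapping.keys p \<union> Poly_Mapping.keys q"])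
    (auto simp: keys_add lookup_add distrib_left single_add sum.distrib)

lemma pdiff_zero: "pdiff v 0 = 0"
  by (simp add: pdiff_def)

lemma pdiff_single:
  "pdiff v (Poly_Mapping.single x c) =
   Poly_Mapping.single (x - Poly_Mapping.single v 1) (of_nat (Poly_Mapping.lookup x v) * c)"
  by (subst pdiff_superset[where K="{x}"]) (auto simp: lookup_single)

lemma pdiff_sum: "pdiff v (sum f I) = (\<Sum>i\<in>I. pdiff v (f i))"
  by (induction I rule: infinite_finite_induct) (auto simp: pdiff_zero pdiff_add)

lemma pdiff_single_mult:
  fixes c d :: "'a::comm_ring_1"
  shows "pdiff v (Poly_Mapping.single x c * Poly_Mapping.single y d) =
   pdiff v (Poly_Mapping.single x c) * Poly_Mapping.single y d
   + Poly_Mapping.single x c * pdiff v (Poly_Mapping.single y d)"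
proof -
  let ?d = "Poly_Mapping.single v (1::nat)"
  have shift_left: "Poly_Mapping.single (x + y - ?d) (of_nat (Poly_Mapping.lookup x v) * b)
      = Poly_Mapping.single (x - ?d + y) (of_nat (Poly_Mapping.lookup x v) * b)" for b :: 'a
  proof (cases "Poly_Mapping.lookup x v = 0")
    case False
    then have "x + y - ?d = x - ?d + y"
      by (intro poly_mapping_eqI) (auto simp: lookup_add lookup_minus lookup_single when_def)
    then show ?thesis by simp
  qed simp
  have shift_right: "Poly_Mapping.single (x + y - ?d) (of_nat (Poly_Mapping.lookup y v) * b)
      = Poly_Mapping.single (x + (y - ?d)) (of_nat (Poly_Mapping.lookup y v) * b)" for b :: 'a
  proof (cases "Poly_Mapping.lookup y v = 0")
    case False
    then have "x + y - ?d = x + (y - ?d)"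
      by (intro poly_mapping_eqI) (auto simp: lookup_add lookup_minus lookup_single when_def)
    then show ?thesis by simp
  qed simp
  show ?thesis
    unfolding mult_single pdiff_single lookup_add of_nat_add distrib_right single_add
      shift_left shift_right
    by (simp add: algebra_simps)
qed

lemma pdiff_mult: "pdiff v (p * q) = pdiff v p * q + p * pdiff v q"
proof -
  let ?P = "\<lambda>x. Poly_Mapping.single x (Poly_Mapping.lookup p x)"
  let ?Q = "\<lambda>y. Poly_Mapping.single y (Poly_Mapping.lookup q y)"
  have "pdiff v (p * q) = (\<Sum>x\<in>Poly_Mapping.keys p. \<Sum>y\<in>Poly_Mapping.keys q.
      pdiff v (?P x) * ?Q y + ?P x * pdiff v (?Q y))"
    unfolding mult_as_sum_single[of p q] by (simp add: pdiff_sum pdiff_single_mult)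
  also have "\<dots> = pdiff v (\<Sum>x\<in>Poly_Mapping.keys p. ?P x) * (\<Sum>y\<in>Poly_Mapping.keys q. ?Q y)
      + (\<Sum>x\<in>Poly_Mapping.keys p. ?P x) * pdiff v (\<Sum>y\<in>Poly_Mapping.keys q. ?Q y)"
    by (simp add: pdiff_sum sum_product sum.distrib)
  also have "\<dots> = pdiff v p * q + p * pdiff v q"
    by (simp only: sum_single_lookup)
  finally show ?thesis .
qed

lemma pdiff_of_int: "pdiff v (of_int z) = 0"
  using pdiff_single[of v 0 "of_int z"] by simp

lemma pdiff_Var: "pdiff v (Var w) = of_bool (w = v)"
  by (auto simp: Var_def pdiff_single lookup_single_not_eq)

lemma pdiff_prod:
  "finite I \<Longrightarrow> pdiff v (prod f I) = (\<Sum>i\<in>I. pdiff v (f i) * prod f (I - {i}))"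
proof (induction I rule: finite_induct)
  case empty
  show ?case using pdiff_of_int[of v 1] by simp
next
  case (insert x F)
  have "prod f (insert x F - {i}) = f x * prod f (F - {i})" if "i \<in> F" for i
  proof -
    have "insert x F - {i} = insert x (F - {i})"
      using insert that by auto
    then show ?thesis
      using insert by simp
  qed
  moreover have "insert x F - {x} = F"
    using insert by auto
  ultimately show ?case
    using insert by (simp add: pdiff_mult sum_distrib_left algebra_simps)
qed

subsection \<open>Determinants\<close>

lemma detq_zero_row:
  assumes "i < q" and "\<And>j. j < q \<Longrightarrow> M i j = 0"
  shows "detq q M = 0"
  unfolding detq_def
proof (intro sum.neutral ballI)
  fix \<sigma> assume "\<sigma> \<in> {\<sigma>. \<sigma> permutes {0..<q}}"
  then have "\<sigma> i < q"
    using assms(1) permutes_in_image by fastforce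
  then have "(\<Prod>i<q. M i (\<sigma> i)) = 0"
    using assms by (intro prod_zero) auto
  then show "of_int (sign \<sigma>) * (\<Prod>i<q. M i (\<sigma> i)) = 0"
    by simp
qed

lemma prod_dvd_detq:
  assumes "\<And>i j. i < q \<Longrightarrow> j < q \<Longrightarrow> d i dvd M i j"
  shows "(\<Prod>i<q. d i) dvd detq q M"
  unfolding detq_def
proof (intro dvd_sum dvd_mult)
  fix \<sigma> assume "\<sigma> \<in> {\<sigma>. \<sigma> permutes {0..<q}}"
  then have "\<And>i. i < q \<Longrightarrow> \<sigma> i < q"
    using permutes_in_image by fastforce
  then show "(\<Prod>i<q. d i) dvd (\<Prod>i<q. M i (\<sigma> i))"
    by (intro prod_dvd_prod assms) auto
qed

lemma detq_single_permutation:
  assumes "\<pi> permutes {0..<q}"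
    and "\<And>\<sigma>. \<sigma> permutes {0..<q} \<Longrightarrow> (\<And>i. i < q \<Longrightarrow> M i (\<sigma> i) \<noteq> 0) \<Longrightarrow> \<sigma> = \<pi>"
  shows "detq q M = of_int (sign \<pi>) * (\<Prod>i<q. M i (\<pi> i))"
proof -
  let ?S = "{\<sigma>. \<sigma> permutes {0..<q}}"
  let ?g = "\<lambda>\<sigma>. of_int (sign \<sigma>) * (\<Prod>i<q. M i (\<sigma> i))"
  have "detq q M = ?g \<pi> + sum ?g (?S - {\<pi>})"
    unfolding detq_def using assms(1) by (intro sum.remove) (simp_all add: finite_permutations)
  also have "sum ?g (?S - {\<pi>}) = 0"
  proof (intro sum.neutral ballI)
    fix \<sigma> assume "\<sigma> \<in> ?S - {\<pi>}"
    then obtain i where "i < q" "M i (\<sigma> i) = 0"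
      using assms(2) by blast
    then have "(\<Prod>i<q. M i (\<sigma> i)) = 0"
      by (intro prod_zero) auto
    then show "?g \<sigma> = 0"
      by simp
  qed
  finally show ?thesis
    by simp
qed

lemma detq_lower_triangular:
  assumes "\<And>i j. i < q \<Longrightarrow> j < q \<Longrightarrow> i < j \<Longrightarrow> M i j = 0"
  shows "detq q M = (\<Prod>i<q. M i i)"
proof -
  have "\<sigma> = id" if \<sigma>: "\<sigma> permutes {0..<q}" and nz: "\<And>i. i < q \<Longrightarrow> M i (\<sigma> i) \<noteq> 0" for \<sigma>
  proof -
    have "\<sigma> i \<le> i" if "i \<in> {0..<q}" for i
      using that nz[of i] assms[of i "\<sigma> i"] permutes_in_image[OF \<sigma>, of i] by fastforce
    then show ?thesis
      using permutes_natset_le[OF \<sigma>] by blast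
  qed
  then show ?thesis
    by (subst detq_single_permutation[of id]) (simp_all add: permutes_id)
qed

lemma pdiff_detq:
  "pdiff v (detq q M) = (\<Sum>i<q. detq q (\<lambda>r c. if r = i then pdiff v (M r c) else M r c))"
proof -
  have row: "(\<Prod>r<q. if r = i then pdiff v (M r (\<sigma> r)) else M r (\<sigma> r))
      = pdiff v (M i (\<sigma> i)) * (\<Prod>r\<in>{..<q} - {i}. M r (\<sigma> r))" if "i < q" for i \<sigma>
    using that by (simp add: prod.delta_remove)
  show ?thesis
    unfolding detq_def
    by (simp add: pdiff_sum pdiff_mult pdiff_of_int pdiff_prod row sum_distrib_left
        sum.swap[where B="{..<q}"] ac_simps)
qed

subsection \<open>The Jacobian at the point \<open>a\<close>\<close>

lemma apt_last_row: "apt (Suc t) p e (Suc t, j) = 0"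
  by (simp add: apt_def Let_def)

lemma apt_upper_rows:
  "l < t \<Longrightarrow> apt (Suc t) p e (Suc l, c) = (if (c + t - 1) mod t = l then p ^ e (Suc l) else 0)"
  by (auto simp: apt_def Let_def)

lemma peval_jac_apt:
  "peval (apt (Suc t) p e) (jac (Suc t) v k) =
   detq (Suc t) (\<lambda>r c. if r = t then of_bool ((Suc t, k + c) = v) else apt (Suc t) p e (Suc r, k + c))"
proof -
  let ?a = "apt (Suc t) p e"
  let ?N = "\<lambda>i r c. if r = i then of_bool ((Suc r, k + c) = v) else ?a (Suc r, k + c)"
  have "peval ?a (jac (Suc t) v k) = (\<Sum>i<Suc t. detq (Suc t) (?N i))"
    unfolding jac_def fk_def
    by (simp add: pdiff_detq pdiff_Var peval_add peval_sum peval_detq peval_of_bool peval_Var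
        if_distrib[where f="peval ?a"] cong: if_cong)
  also have "\<dots> = detq (Suc t) (?N t)"
    by (simp add: detq_zero_row[of t] apt_last_row)
  also have "?N t = (\<lambda>r c. if r = t then of_bool ((Suc t, k + c) = v) else ?a (Suc r, k + c))"
    by (intro ext) simp
  finally show ?thesis .
qed

lemma prod_dvd_peval_jac_apt:
  "(\<Prod>l<t. p ^ e (Suc l)) dvd peval (apt (Suc t) p e) (jac (Suc t) v k)"
proof -
  let ?d = "\<lambda>r. if r < t then p ^ e (Suc r) else 1"
  have "(\<Prod>r<Suc t. ?d r) = (\<Prod>l<t. p ^ e (Suc l))"
    by simp
  then show ?thesis
    unfolding peval_jac_apt
    using prod_dvd_detq[of "Suc t" ?d] by (simp add: apt_upper_rows)
qed

lemma peval_jac_apt_eq_0: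
  "i < k \<Longrightarrow> peval (apt (Suc t) p e) (jac (Suc t) (Suc t, i) k) = 0"
  unfolding peval_jac_apt by (rule detq_zero_row[of t]) auto

text \<open>The only permutation selecting nonzero entries of \<open>X\<^bsub>[k,k+t]\<^esub>(a)\<close> with its last row
replaced by the first unit row: the last row must take column \<open>0\<close>, and then row \<open>l < t\<close> takes
the unique column among \<open>1..t\<close> where it is nonzero.\<close>

definition support_perm :: "nat \<Rightarrow> nat \<Rightarrow> nat \<Rightarrow> nat" where
  "support_perm t k x = (if x < t then (x + t - k mod t) mod t + 1 else if x = t then 0 else x)"

lemma support_perm_mod:
  assumes "x < t"
  shows "(k + support_perm t k x + t - 1) mod t = x"
proof -
  let ?d = "(x + t - k mod t) mod t"
  have "(k + support_perm t k x + t - 1) mod t = (k + ?d) mod t"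
    using assms by (simp add: support_perm_def)
  also have "\<dots> = (k mod t + (x + t - k mod t)) mod t"
    by (metis mod_add_left_eq mod_add_right_eq)
  also have "k mod t + (x + t - k mod t) = x + t"
    using assms mod_less_divisor[of t k] by linarith
  finally show ?thesis
    using assms by simp
qed

lemma support_perm_range: "x < t \<Longrightarrow> support_perm t k x \<in> {1..t}"
  by (simp add: support_perm_def Suc_leI)

lemma support_perm_permutes: "support_perm t k permutes {0..<Suc t}"
proof (rule bij_imp_permutes)
  let ?inv = "\<lambda>c. if c = 0 then t else (k + c + t - 1) mod t"
  have "?inv (support_perm t k x) = x" if "x \<in> {0..<Suc t}" for x
    using that support_perm_mod[of x t k] support_perm_range[of x t k]
    by (cases "x < t") (auto simp: support_perm_def)
  then have inj: "inj_on (support_perm t k) {0..<Suc t}"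
    by (rule inj_on_inverseI)
  have img: "support_perm t k ` {0..<Suc t} \<subseteq> {0..<Suc t}"
    using support_perm_range by (force simp: support_perm_def)
  show "bij_betw (support_perm t k) {0..<Suc t} {0..<Suc t}"
    unfolding bij_betw_def using inj img endo_inj_surj[OF _ img inj] by auto
  show "\<And>x. x \<notin> {0..<Suc t} \<Longrightarrow> support_perm t k x = x"
    by (simp add: support_perm_def)
qed

lemma inj_on_add_mod: "inj_on (\<lambda>y. (K + y) mod t) {1..t::nat}"
proof (rule inj_onI)
  fix y y' assume y: "y \<in> {1..t}" "y' \<in> {1..t}" and "(K + y) mod t = (K + y') mod t"
  then have "y mod t = y' mod t"
    by (simp add: mod_eq_iff_dvd_symdiff_nat)
  then show "y = y'"
    using y by (metis atLeastAtMost_iff mod_less mod_self nat_less_le not_one_le_zero)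
qed

lemma support_perm_unique:
  assumes \<sigma>: "\<sigma> permutes {0..<Suc t}" and "\<sigma> t = 0"
    and mod: "\<And>j. j < t \<Longrightarrow> (k + \<sigma> j + t - 1) mod t = j"
  shows "\<sigma> = support_perm t k"
proof
  fix x
  show "\<sigma> x = support_perm t k x"
  proof (cases "x < t")
    case True
    have "\<sigma> x \<noteq> \<sigma> t"
      using True permutes_inj[OF \<sigma>] by (auto simp: inj_eq)
    then have "\<sigma> x \<in> {1..t}"
      using True \<open>\<sigma> t = 0\<close> permutes_in_image[OF \<sigma>, of x] by auto
    moreover have "(k + t - 1 + \<sigma> x) mod t = (k + t - 1 + support_perm t k x) mod t"
      using mod[OF True] support_perm_mod[OF True, of k] True by (simp add: add_ac)
    ultimately show ?thesis
      using inj_on_add_mod[of "k + t - 1" t] support_perm_range[OF True, of k]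
      by (auto dest: inj_onD)
  next
    case False
    then show ?thesis
      using \<open>\<sigma> t = 0\<close> permutes_not_in[OF \<sigma>] by (cases "x = t") (auto simp: support_perm_def)
  qed
qed

lemma peval_jac_apt_diagonal:
  "peval (apt (Suc t) p e) (jac (Suc t) (Suc t, k) k)
   = of_int (sign (support_perm t k)) * (\<Prod>l<t. p ^ e (Suc l))"
proof -
  let ?a = "apt (Suc t) p e"
  let ?M = "\<lambda>r c. if r = t then of_bool ((Suc t, k + c) = (Suc t, k)) else ?a (Suc r, k + c)"
  have "detq (Suc t) ?M = of_int (sign (support_perm t k)) * (\<Prod>r<Suc t. ?M r (support_perm t k r))"
  proof (rule detq_single_permutation[OF support_perm_permutes])
    fix \<sigma> assume \<sigma>: "\<sigma> permutes {0..<Suc t}" and nz: "\<And>r. r < Suc t \<Longrightarrow> ?M r (\<sigma> r) \<noteq> 0"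
    have "\<sigma> t = 0"
      using nz[of t] by simp
    moreover have "(k + \<sigma> j + t - 1) mod t = j" if "j < t" for j
      using nz[of j] that by (auto simp: apt_upper_rows split: if_splits)
    ultimately show "\<sigma> = support_perm t k"
      using support_perm_unique[OF \<sigma>] by blast
  qed
  also have "(\<Prod>r<Suc t. ?M r (support_perm t k r)) = (\<Prod>l<t. p ^ e (Suc l))"
  proof -
    have "(\<Prod>l<t. ?M l (support_perm t k l)) = (\<Prod>l<t. p ^ e (Suc l))"
      by (rule prod.cong) (use support_perm_mod[of _ t k] in \<open>simp_all add: apt_upper_rows\<close>)
    then show ?thesis
      by (simp add: support_perm_def)
  qed
  finally show ?thesis
    by (simp add: peval_jac_apt)
qed

lemma peval_jac_minor_last_row:
  "peval (apt (Suc t) p e) (detq q (\<lambda>r c. jac (Suc t) (Suc t, r + 1) (c + 1)))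
   = (\<Prod>i<q. of_int (sign (support_perm t (Suc i)))) * (\<Prod>l<t. p ^ e (Suc l)) ^ q"
  unfolding peval_detq
  by (subst detq_lower_triangular)
    (simp_all add: peval_jac_apt_eq_0 peval_jac_apt_diagonal prod.distrib)

lemma jac_minors_Suc:
  "jac_minors (Suc t) n = {detq (n - t) (\<lambda>r c. jac (Suc t) (\<rho> r) (c + 1)) | \<rho>.
     inj_on \<rho> {0..<n - t} \<and> \<rho> ` {0..<n - t} \<subseteq> {1..Suc t} \<times> {1..n}}"
  by (simp add: jac_minors_def Let_def)

lemma power_dvd_peval_jac_minor:
  assumes "g \<in> jac_minors (Suc t) n"
  shows "(\<Prod>l<t. p ^ e (Suc l)) ^ (n - t) dvd peval (apt (Suc t) p e) g"
proof -
  obtain \<rho> where g: "g = detq (n - t) (\<lambda>r c. jac (Suc t) (\<rho> r) (c + 1))"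
    using assms unfolding jac_minors_Suc by blast
  show ?thesis
    using prod_dvd_detq[of "n - t" "\<lambda>_. \<Prod>l<t. p ^ e (Suc l)"]
    unfolding g peval_detq by (simp add: prod_dvd_peval_jac_apt)
qed

lemma jac_minor_last_row_mem:
  "detq (n - t) (\<lambda>r c. jac (Suc t) (Suc t, r + 1) (c + 1)) \<in> jac_minors (Suc t) n"
  unfolding jac_minors_Suc
  by (intro CollectI exI[of _ "\<lambda>r. (Suc t, r + 1)"]) (auto simp: inj_on_def)

theorem lemma5p6:
  fixes p :: "'a::idom" and m n :: nat and e :: "nat \<Rightarrow> nat"
  assumes "dvr_uniformiser p"
    and "2 \<le> m" and "m \<le> n"
    and "\<And>i j. 1 \<le> i \<Longrightarrow> i \<le> j \<Longrightarrow> j \<le> m - 1 \<Longrightarrow> e i \<le> e j"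
  shows "peval (apt m p e) ` ideal_gen (jac_minors m n)
         = {(\<Prod>r=1..m - 1. p ^ e r) ^ (n - (m - 1)) * x | x. True}"
proof -
  obtain t where m: "m = Suc t"
    using assms(2) by (cases m) auto
  define \<Delta> where "\<Delta> = (\<Prod>l<t. p ^ e (Suc l))"
  define u :: 'a where "u = (\<Prod>i<n - t. of_int (sign (support_perm t (Suc i))))"
  let ?g0 = "detq (n - t) (\<lambda>r c. jac (Suc t) (Suc t, r + 1) (c + 1))"
  have "peval (apt m p e) ?g0 = u * \<Delta> ^ (n - t)"
    unfolding m \<Delta>_def u_def by (rule peval_jac_minor_last_row)
  moreover have "u * u = 1"
    by (simp add: u_def prod.distrib[symmetric] of_int_mult[symmetric])
  ultimately have "peval (apt m p e) ?g0 * u = \<Delta> ^ (n - t)"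
    by (metis mult.assoc mult.commute mult_1_left)
  then have "peval (apt m p e) ` ideal_gen (jac_minors m n) = {\<Delta> ^ (n - t) * x | x. True}"
    unfolding m \<Delta>_def
    by (intro peval_ideal_gen_eq_principal[OF _ jac_minor_last_row_mem] power_dvd_peval_jac_minor)
  moreover have "(\<Prod>r=1..m - 1. p ^ e r) = \<Delta>"
    by (simp add: \<Delta>_def m prod.atLeast1_atMost_eq)
  ultimately show ?thesis
    by (simp add: m)
qed

end
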